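(* In the setting below, let $\Omega_1,\dots,\Omega_k\subseteq\mathcal{X}\times\mathcal{Y}$ with $\mathbb{P}_{P^{\pi^*}_{X,Y}}((X,Y)\in\Omega_j)>0$ for each $j$. For each $j$ let $\{(X_i^{\Omega_j},Y_i^{\Omega_j})\}_{i=1}^{n_j}$ be the calibration points lying in $\Omega_j$, $V_i^{\Omega_j}=s(X_i^{\Omega_j},Y_i^{\Omega_j})$, $$\hat F^{\Omega_j}_n(x,y)=\sum_{i=1}^{n_j}p_i^{\Omega_j}(x,y)\delta_{V_i^{\Omega_j}}+p^{\Omega_j}_{n+1}(x,y)\delta_\infty,\quad p_i^{\Omega_j}(x,y)=\frac{w(X_i^{\Omega_j},Y_i^{\Omega_j})}{\sum_{l=1}^{n_j}w(X_l^{\Omega_j},Y_l^{\Omega_j})+w(x,y)},\ p_{n+1}^{\Omega_j}(x,y)=\frac{w(x,y)}{\sum_{l=1}^{n_j}w(X_l^{\Omega_j},Y_l^{\Omega_j})+w(x,y)},$$ $\eta^{\Omega_j}(x,y)=\mathrm{Quantile}_{1-\alpha}(\hat F^{\Omega_j}_n(x,y))$, $\hat C_n^{\Omega_j}(x)=\{y:(x,y)\in\Omega_j,\ s(x,y)\le\eta^{\Omega_j}(x,y)\}$ and $\hat C_n^\Omega(x)=\bigcup_{j=1}^k\hat C_n^{\Omega_j}(x)$. Then for all $j\in\{1,\dots,k\}$, $$\mathbb{P}_{(X,Y)\sim P^{\pi^*}_{X,Y}}\big(Y\in\hat C_n^\Omega(X)\mid(X,Y)\in\Omega_j\big)\ge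1-\alpha.$$
   Context: Setting: covariate space $\mathcal{X}$, outcome space $\mathcal{Y}$, covariate law $P_X$, outcome law $P(y\mid x,a)$, policies $\pi^b,\pi^*$; $P^\pi_{X,Y}$ is the law of $(X,Y)$ with $X\sim P_X$, $A\mid X\sim\pi$, $Y\mid X,A\sim P(\cdot\mid X,A)$; $P^{\pi^*}_{X,Y}\ll P^{\pi^b}_{X,Y}$ and $w=\mathrm{d}P^{\pi^*}_{X,Y}/\mathrm{d}P^{\pi^b}_{X,Y}$ (exact weights). Calibration data $\{(X_i,Y_i)\}_{i=1}^n$ i.i.d. from $P^{\pi^b}_{X,Y}$; score function $s$; $\alpha\in(0,1)$; $\mathrm{Quantile}_\beta(F)=\inf\{z:F((-\infty,z])\ge\beta\}$. Probability is over calibration data and an independent test pair. *)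

theory Defs
  imports "HOL-Probability.Probability"
begin

definition policy_law ::
  "'x measure \<Rightarrow> 'y measure \<Rightarrow> ('x \<Rightarrow> 'a measure) \<Rightarrow> ('x \<times> 'a \<Rightarrow> 'y measure) \<Rightarrow> ('x \<times> 'y) measure" where
  "policy_law PX MY pol K =
     PX \<bind> (\<lambda>x. pol x \<bind> (\<lambda>a. K (x, a) \<bind> (\<lambda>y. return (PX \<Otimes>\<^sub>M MY) (x, y))))"

definition cal_idx :: "nat \<Rightarrow> (nat \<Rightarrow> 'x \<times> 'y) \<Rightarrow> ('x \<times> 'y) set \<Rightarrow> nat set" where
  "cal_idx n D Om = {i \<in> {..<n}. D i \<in> Om}"

definition wdenom :: "(('x \<times> 'y) \<Rightarrow> real) \<Rightarrow> nat \<Rightarrow> (nat \<Rightarrow> 'x \<times> 'y) \<Rightarrow> ('x \<times> 'y) set \<Rightarrow> 'x \<times> 'y \<Rightarrow> real" where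
  "wdenom w n D Om t = (\<Sum>l\<in>cal_idx n D Om. w (D l)) + w t"

definition wcdf ::
  "(('x \<times> 'y) \<Rightarrow> real) \<Rightarrow> (('x \<times> 'y) \<Rightarrow> real) \<Rightarrow> nat \<Rightarrow> (nat \<Rightarrow> 'x \<times> 'y) \<Rightarrow> ('x \<times> 'y) set \<Rightarrow> 'x \<times> 'y \<Rightarrow> ereal \<Rightarrow> real" where
  "wcdf w s n D Om t z =
     (\<Sum>i\<in>cal_idx n D Om. if ereal (s (D i)) \<le> z then w (D i) / wdenom w n D Om t else 0)
     + (if \<infinity> \<le> z then w t / wdenom w n D Om t else 0)"

definition wquantile ::
  "real \<Rightarrow> (('x \<times> 'y) \<Rightarrow> real) \<Rightarrow> (('x \<times> 'y) \<Rightarrow> real) \<Rightarrow> nat \<Rightarrow> (nat \<Rightarrow> 'x \<times> 'y) \<Rightarrow> ('x \<times> 'y) set \<Rightarrow> 'x \<times> 'y \<Rightarrow> ereal" where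
  "wquantile beta w s n D Om t = Inf {z. wcdf w s n D Om t z \<ge> beta}"

definition region_set ::
  "real \<Rightarrow> (('x \<times> 'y) \<Rightarrow> real) \<Rightarrow> (('x \<times> 'y) \<Rightarrow> real) \<Rightarrow> nat \<Rightarrow> (nat \<Rightarrow> 'x \<times> 'y) \<Rightarrow> ('x \<times> 'y) set \<Rightarrow> 'x \<Rightarrow> 'y set" where
  "region_set alpha w s n D Om x =
     {y. (x, y) \<in> Om \<and> ereal (s (x, y)) \<le> wquantile (1 - alpha) w s n D Om (x, y)}"

definition union_set ::
  "real \<Rightarrow> (('x \<times> 'y) \<Rightarrow> real) \<Rightarrow> (('x \<times> 'y) \<Rightarrow> real) \<Rightarrow> nat \<Rightarrow> (nat \<Rightarrow> 'x \<times> 'y) \<Rightarrow> nat \<Rightarrow> (nat \<Rightarrow> ('x \<times> 'y) set) \<Rightarrow> 'x \<Rightarrow> 'y set" where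
  "union_set alpha w s n D k Om x = (\<Union>j\<in>{1..k}. region_set alpha w s n D (Om j) x)"

end

theory Submission
  imports Defs "HOL-Combinatorics.Permutations"
begin

text \<open>Append the test point to the calibration sample as an (n+1)-st coordinate. Since its law
  is the behaviour law reweighted by w, the probability that it lies in a region and is covered
  equals the expectation, under n+1 independent behaviour-policy draws, of w at the last
  coordinate times the coverage indicator. The product law is exchangeable, so this is the average
  of the same quantity over all coordinates. For every fixed sample, the points of the region whose
  weighted rank (the w-mass of sample points of the region with strictly smaller score) is below
  (1 - alpha) times the total w-mass of the region carry at least a (1 - alpha) fraction of that
  mass, and for the test point this rank condition implies coverage by the weighted quantile.
  Coverage by the union of the regions only helps.\<close>

definition region_mass :: "('b \<Rightarrow> real) \<Rightarrow> 'b set \<Rightarrow> 'i set \<Rightarrow> ('i \<Rightarrow> 'b) \<Rightarrow> real" where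
  "region_mass w A I z = (\<Sum>i\<in>I. if z i \<in> A then w (z i) else 0)"

lemma region_mass_nonneg:
  assumes "\<And>i. i \<in> I \<Longrightarrow> 0 \<le> w (z i)"
  shows "0 \<le> region_mass w A I z"
  unfolding region_mass_def using assms by (intro sum_nonneg) auto

lemma region_mass_mono:
  assumes "\<And>i. i \<in> I \<Longrightarrow> 0 \<le> w (z i)" and "A \<subseteq> B"
  shows "region_mass w A I z \<le> region_mass w B I z"
  unfolding region_mass_def using assms by (intro sum_mono) auto

lemma region_mass_cong:
  assumes "\<And>i. i \<in> I \<Longrightarrow> z i \<in> A \<longleftrightarrow> z i \<in> B"
  shows "region_mass w A I z = region_mass w B I z"
  unfolding region_mass_def using assms by (intro sum.cong) auto

lemma region_mass_permute:
  assumes "p permutes I"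
  shows "region_mass w A I (\<lambda>i\<in>I. z (p i)) = region_mass w A I z"
proof -
  have "region_mass w A I (\<lambda>i\<in>I. z (p i)) = (\<Sum>i\<in>I. (\<lambda>i. if z i \<in> A then w (z i) else 0) (p i))"
    unfolding region_mass_def by (intro sum.cong) auto
  also have "\<dots> = region_mass w A I z"
    unfolding region_mass_def using sum.permute[OF assms, of "\<lambda>i. if z i \<in> A then w (z i) else 0"]
    by (simp add: comp_def)
  finally show ?thesis .
qed

lemma region_mass_fun_upd:
  assumes "finite N" "n \<notin> N"
  shows "region_mass w A (insert n N) (D(n := t)) =
    region_mass w A N D + (if t \<in> A then w t else 0)"
  unfolding region_mass_def using assms by (simp add: add.commute) (intro sum.cong, auto)

text \<open>If some point of A is not selected, take one of minimal score: its rank is at least b W,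
  and every point of A with strictly smaller score is selected.\<close>
lemma region_mass_selected_ge:
  fixes w s :: "'b \<Rightarrow> real"
  assumes fin: "finite I" and w_nonneg: "\<And>i. i \<in> I \<Longrightarrow> 0 \<le> w (z i)" and "b \<le> 1"
  shows "b * region_mass w A I z \<le>
    (\<Sum>k\<in>I. if z k \<in> A \<and> region_mass w {x\<in>A. s x < s (z k)} I z < b * region_mass w A I z
             then w (z k) else 0)"
    (is "b * ?W \<le> (\<Sum>k\<in>I. if ?sel k then _ else 0)")
proof (cases "\<exists>k\<in>I. z k \<in> A \<and> \<not> ?sel k")
  case False
  then have "(\<Sum>k\<in>I. if ?sel k then w (z k) else 0) = ?W"
    unfolding region_mass_def by (intro sum.cong) auto
  moreover have "0 \<le> ?W" using w_nonneg by (rule region_mass_nonneg)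
  ultimately show ?thesis using mult_right_mono[OF \<open>b \<le> 1\<close>] by fastforce
next
  case True
  define F where "F = {k\<in>I. z k \<in> A \<and> \<not> ?sel k}"
  obtain k0 where k0: "k0 \<in> F" and k0_min: "\<And>k. k \<in> F \<Longrightarrow> s (z k0) \<le> s (z k)"
    using ex_min_if_finite[of "(\<lambda>k. s (z k)) ` F"] fin True unfolding F_def
    by (fastforce simp: not_less)
  have "b * ?W \<le> region_mass w {x\<in>A. s x < s (z k0)} I z" using k0 unfolding F_def by auto
  also have "\<dots> \<le> (\<Sum>k\<in>I. if ?sel k then w (z k) else 0)"
    unfolding region_mass_def[of w "{x\<in>A. s x < s (z k0)}"]
  proof (intro sum_mono)
    fix i assume "i \<in> I"
    then show "(if z i \<in> {x\<in>A. s x < s (z k0)} then w (z i) else 0) \<le>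
        (if ?sel i then w (z i) else 0)"
      using k0_min[of i] w_nonneg[of i] unfolding F_def by auto
  qed
  finally show ?thesis .
qed

lemma wdenom_eq_region_mass: "wdenom w n D Om t = region_mass w Om {..<n} D + w t"
  unfolding wdenom_def region_mass_def cal_idx_def sum.inter_filter[OF finite_lessThan] ..

lemma wcdf_eq_region_mass:
  assumes "z \<noteq> \<infinity>"
  shows "wcdf w s n D Om t z = region_mass w {x\<in>Om. ereal (s x) \<le> z} {..<n} D / wdenom w n D Om t"
proof -
  have "\<not> \<infinity> \<le> z" using assms by (cases z) auto
  then show ?thesis
    unfolding wcdf_def region_mass_def cal_idx_def sum_divide_distrib
      sum.inter_filter[OF finite_lessThan]
    by (simp, intro sum.cong) auto
qed

lemma le_wquantile_iff:
  fixes w s :: "'x \<times> 'y \<Rightarrow> real"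
  assumes w_nonneg: "\<And>i. i < n \<Longrightarrow> 0 \<le> w (D i)" "0 \<le> w t" and "0 < b"
  shows "ereal (s t) \<le> wquantile b w s n D Om t \<longleftrightarrow>
    region_mass w {x\<in>Om. s x < s t} {..<n} D / wdenom w n D Om t < b"
    (is "_ \<longleftrightarrow> ?G < b")
proof
  have d_nonneg: "0 \<le> wdenom w n D Om t"
    unfolding wdenom_eq_region_mass using w_nonneg
    by (intro add_nonneg_nonneg region_mass_nonneg) auto
  show "?G < b" if le: "ereal (s t) \<le> wquantile b w s n D Om t"
  proof (rule ccontr)
    assume "\<not> ?G < b"
    define S where "S = {s (D i) |i. i < n \<and> D i \<in> Om \<and> s (D i) < s t}"
    have "S \<noteq> {}"
    proof
      assume "S = {}"
      then have "region_mass w {x\<in>Om. s x < s t} {..<n} D = region_mass w {} {..<n} D"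
        unfolding S_def by (intro region_mass_cong) auto
      then show False using \<open>\<not> ?G < b\<close> \<open>0 < b\<close> by (simp add: region_mass_def)
    qed
    moreover have "finite S" unfolding S_def by simp
    ultimately have "Max S \<in> S" and Max_ge: "\<And>c. c \<in> S \<Longrightarrow> c \<le> Max S" by simp_all
    then have "Max S < s t" unfolding S_def by auto
    have "wcdf w s n D Om t (ereal (Max S)) = ?G"
    proof -
      have "region_mass w {x\<in>Om. ereal (s x) \<le> ereal (Max S)} {..<n} D =
          region_mass w {x\<in>Om. s x < s t} {..<n} D"
        using Max_ge \<open>Max S < s t\<close> unfolding S_def
        by (intro region_mass_cong) (fastforce intro: order.strict_trans1)
      then show ?thesis by (simp add: wcdf_eq_region_mass)
    qed
    then have "wquantile b w s n D Om t \<le> ereal (Max S)"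
      using \<open>\<not> ?G < b\<close> unfolding wquantile_def by (intro Inf_lower) simp
    with le have "ereal (s t) \<le> ereal (Max S)" by (rule order.trans)
    then show False using \<open>Max S < s t\<close> by simp
  qed
  show "ereal (s t) \<le> wquantile b w s n D Om t" if "?G < b"
    unfolding wquantile_def
  proof (rule Inf_greatest, rule ccontr)
    fix z assume "z \<in> {z. b \<le> wcdf w s n D Om t z}" and "\<not> ereal (s t) \<le> z"
    then have "z < ereal (s t)" and "b \<le> wcdf w s n D Om t z" by auto
    have "wcdf w s n D Om t z = region_mass w {x\<in>Om. ereal (s x) \<le> z} {..<n} D / wdenom w n D Om t"
      using \<open>z < ereal (s t)\<close> by (intro wcdf_eq_region_mass) auto
    also have "\<dots> \<le> ?G"
      using \<open>z < ereal (s t)\<close> w_nonneg d_nonneg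
      by (intro divide_right_mono region_mass_mono) (auto dest: order.strict_trans1)
    finally show False using \<open>b \<le> wcdf w s n D Om t z\<close> \<open>?G < b\<close> by simp
  qed
qed

lemma le_wquantile_if_rank_less:
  fixes w s :: "'x \<times> 'y \<Rightarrow> real"
  assumes w_nonneg: "\<And>i. i < n \<Longrightarrow> 0 \<le> w (D i)" "0 \<le> w t" and "0 < b"
    and rank_less:
      "region_mass w {x\<in>Om. s x < s t} {..<n} D < b * (region_mass w Om {..<n} D + w t)"
  shows "ereal (s t) \<le> wquantile b w s n D Om t"
proof -
  have "0 \<le> region_mass w {x\<in>Om. s x < s t} {..<n} D"
    using w_nonneg by (intro region_mass_nonneg) auto
  with rank_less \<open>0 < b\<close> have "0 < region_mass w Om {..<n} D + w t"
    by (smt (verit) mult_nonneg_nonpos)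
  with rank_less have "region_mass w {x\<in>Om. s x < s t} {..<n} D / wdenom w n D Om t < b"
    by (simp add: wdenom_eq_region_mass divide_less_eq mult.commute)
  with w_nonneg \<open>0 < b\<close> show ?thesis by (simp add: le_wquantile_iff)
qed

lemma mem_union_set_iff:
  "y \<in> union_set alpha w s n D k Om x \<longleftrightarrow>
    (\<exists>j\<in>{1..k}. (x, y) \<in> Om j \<and> ereal (s (x, y)) \<le> wquantile (1 - alpha) w s n D (Om j) (x, y))"
  unfolding union_set_def region_set_def by auto

lemma measurable_region_mass[measurable]:
  assumes [measurable]: "w \<in> borel_measurable P" "A \<in> sets P" and "finite I"
  shows "region_mass w A I \<in> borel_measurable (\<Pi>\<^sub>M i\<in>I. P)"
  unfolding region_mass_def by measurable

lemma measurable_region_mass_below[measurable]: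
  fixes s :: "'b \<Rightarrow> real"
  assumes [measurable]: "w \<in> borel_measurable P" "s \<in> borel_measurable P" "A \<in> sets P"
    "f \<in> M \<rightarrow>\<^sub>M (\<Pi>\<^sub>M i\<in>I. P)" "g \<in> borel_measurable M" and "finite I"
  shows "(\<lambda>\<omega>. region_mass w {x\<in>A. s x < g \<omega>} I (f \<omega>)) \<in> borel_measurable M"
  using \<open>finite I\<close> unfolding region_mass_def mem_Collect_eq by measurable

lemma pred_le_wquantile[measurable]:
  fixes w s :: "'x \<times> 'y \<Rightarrow> real"
  assumes [measurable]: "w \<in> borel_measurable P" "s \<in> borel_measurable P" "Om \<in> sets P"
    and Q: "sets Q = sets P"
    and w_nonneg: "\<And>t. t \<in> space P \<Longrightarrow> 0 \<le> w t" and "0 < b"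
  shows "Measurable.pred ((\<Pi>\<^sub>M i\<in>{..<n}. P) \<Otimes>\<^sub>M Q)
    (\<lambda>\<omega>. ereal (s (snd \<omega>)) \<le> wquantile b w s n (fst \<omega>) Om (snd \<omega>))"
proof (subst measurable_cong)
  fix \<omega> assume "\<omega> \<in> space ((\<Pi>\<^sub>M i\<in>{..<n}. P) \<Otimes>\<^sub>M Q)"
  then have "fst \<omega> \<in> space (\<Pi>\<^sub>M i\<in>{..<n}. P)" "snd \<omega> \<in> space P"
    using sets_eq_imp_space_eq[OF Q] by (auto simp: space_pair_measure)
  then have "\<And>i. i < n \<Longrightarrow> 0 \<le> w (fst \<omega> i)" "0 \<le> w (snd \<omega>)"
    using w_nonneg by (auto simp: space_PiM PiE_iff)
  with \<open>0 < b\<close> show "(ereal (s (snd \<omega>)) \<le> wquantile b w s n (fst \<omega>) Om (snd \<omega>)) \<longleftrightarrow>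
      region_mass w {x\<in>Om. s x < s (snd \<omega>)} {..<n} (fst \<omega>) /
        (region_mass w Om {..<n} (fst \<omega>) + w (snd \<omega>)) < b"
    by (simp add: le_wquantile_iff wdenom_eq_region_mass)
next
  have [measurable]: "snd \<in> (\<Pi>\<^sub>M i\<in>{..<n}. P) \<Otimes>\<^sub>M Q \<rightarrow>\<^sub>M P"
    using measurable_cong_sets[OF refl Q] by auto
  show "Measurable.pred ((\<Pi>\<^sub>M i\<in>{..<n}. P) \<Otimes>\<^sub>M Q) (\<lambda>\<omega>.
      region_mass w {x\<in>Om. s x < s (snd \<omega>)} {..<n} (fst \<omega>) /
        (region_mass w Om {..<n} (fst \<omega>) + w (snd \<omega>)) < b)"
    by measurable
qed

lemma nn_integral_PiM_permute:
  assumes P: "prob_space P" and p: "p permutes I"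
    and f: "f \<in> borel_measurable (\<Pi>\<^sub>M i\<in>I. P)"
  shows "(\<integral>\<^sup>+z. f (\<lambda>i\<in>I. z (p i)) \<partial>(\<Pi>\<^sub>M i\<in>I. P)) = integral\<^sup>N (\<Pi>\<^sub>M i\<in>I. P) f"
proof -
  have p_into: "p i \<in> I" if "i \<in> I" for i using permutes_in_image[OF p] that by simp
  have distr_eq: "distr (\<Pi>\<^sub>M i\<in>I. P) (\<Pi>\<^sub>M i\<in>I. P) (\<lambda>z. \<lambda>i\<in>I. z (p i)) = (\<Pi>\<^sub>M i\<in>I. P)"
    using distr_PiM_reindex[of I "\<lambda>_. P" p I] P permutes_inj_on[OF p] p_into by auto
  have "(\<lambda>z. \<lambda>i\<in>I. z (p i)) \<in> (\<Pi>\<^sub>M i\<in>I. P) \<rightarrow>\<^sub>M (\<Pi>\<^sub>M i\<in>I. P)"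
    using p_into by (intro measurable_restrict measurable_component_singleton)
  then have "integral\<^sup>N (distr (\<Pi>\<^sub>M i\<in>I. P) (\<Pi>\<^sub>M i\<in>I. P) (\<lambda>z. \<lambda>i\<in>I. z (p i))) f =
      (\<integral>\<^sup>+z. f (\<lambda>i\<in>I. z (p i)) \<partial>(\<Pi>\<^sub>M i\<in>I. P))"
    using f by (intro nn_integral_distr) (simp_all only: distr_eq)
  then show ?thesis by (simp only: distr_eq)
qed

lemma nn_integral_PiM_sum_exchangeable:
  fixes h :: "'i \<Rightarrow> ('i \<Rightarrow> 'b) \<Rightarrow> ennreal"
  assumes P: "prob_space P" and I: "finite I" "n \<in> I"
    and h_meas: "\<And>k. k \<in> I \<Longrightarrow> h k \<in> borel_measurable (\<Pi>\<^sub>M i\<in>I. P)"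
    and h_perm: "\<And>p z. p permutes I \<Longrightarrow> h n (\<lambda>i\<in>I. z (p i)) = h (p n) z"
  shows "(\<integral>\<^sup>+z. (\<Sum>k\<in>I. h k z) \<partial>(\<Pi>\<^sub>M i\<in>I. P)) = of_nat (card I) * integral\<^sup>N (\<Pi>\<^sub>M i\<in>I. P) (h n)"
proof -
  have "integral\<^sup>N (\<Pi>\<^sub>M i\<in>I. P) (h k) = integral\<^sup>N (\<Pi>\<^sub>M i\<in>I. P) (h n)" if "k \<in> I" for k
  proof -
    have swap: "Transposition.transpose k n permutes I" using that I(2) by (rule permutes_swap_id)
    show ?thesis
      using nn_integral_PiM_permute[OF P swap h_meas[OF I(2)]] by (simp add: h_perm[OF swap])
  qed
  then show ?thesis
    using h_meas by (simp add: nn_integral_sum)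
qed

lemma nn_integral_PiM_selected_weight_ge:
  fixes w s :: "'b \<Rightarrow> real" and I :: "'i set"
  assumes P: "prob_space P" and I: "finite I" "n \<in> I"
    and [measurable]: "w \<in> borel_measurable P" "s \<in> borel_measurable P" "A \<in> sets P"
    and w_nonneg: "\<And>x. x \<in> space P \<Longrightarrow> 0 \<le> w x" and b: "0 \<le> b" "b \<le> 1"
  shows "ennreal b * (\<integral>\<^sup>+z. ennreal (if z n \<in> A then w (z n) else 0) \<partial>(\<Pi>\<^sub>M i\<in>I. P)) \<le>
    (\<integral>\<^sup>+z. ennreal (if z n \<in> A \<and> region_mass w {x\<in>A. s x < s (z n)} I z < b * region_mass w A I z
      then w (z n) else 0) \<partial>(\<Pi>\<^sub>M i\<in>I. P))"
proof -
  define mass where "mass k z = ennreal (if z k \<in> A then w (z k) else 0)" for k :: 'i and z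
  define sel where "sel k z = ennreal (if z k \<in> A \<and>
    region_mass w {x\<in>A. s x < s (z k)} I z < b * region_mass w A I z then w (z k) else 0)"
    for k :: 'i and z
  have [measurable]: "mass k \<in> borel_measurable (\<Pi>\<^sub>M i\<in>I. P)"
    "sel k \<in> borel_measurable (\<Pi>\<^sub>M i\<in>I. P)"
    if "k \<in> I" for k
    using that I(1) unfolding mass_def sel_def by measurable
  have "mass n (\<lambda>i\<in>I. z (p i)) = mass (p n) z" "sel n (\<lambda>i\<in>I. z (p i)) = sel (p n) z"
    if "p permutes I" for p z
    using that I(2) by (simp_all add: mass_def sel_def region_mass_permute)
  then have mass_sum: "(\<integral>\<^sup>+z. (\<Sum>k\<in>I. mass k z) \<partial>(\<Pi>\<^sub>M i\<in>I. P)) =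
        of_nat (card I) * integral\<^sup>N (\<Pi>\<^sub>M i\<in>I. P) (mass n)"
    and sel_sum: "(\<integral>\<^sup>+z. (\<Sum>k\<in>I. sel k z) \<partial>(\<Pi>\<^sub>M i\<in>I. P)) =
        of_nat (card I) * integral\<^sup>N (\<Pi>\<^sub>M i\<in>I. P) (sel n)"
    by (simp_all add: nn_integral_PiM_sum_exchangeable[OF P I])
  have "of_nat (card I) * (ennreal b * integral\<^sup>N (\<Pi>\<^sub>M i\<in>I. P) (mass n)) =
      (\<integral>\<^sup>+z. ennreal b * (\<Sum>k\<in>I. mass k z) \<partial>(\<Pi>\<^sub>M i\<in>I. P))"
    using I(1) by (simp add: nn_integral_cmult mass_sum mult.left_commute)
  also have "\<dots> \<le> (\<integral>\<^sup>+z. (\<Sum>k\<in>I. sel k z) \<partial>(\<Pi>\<^sub>M i\<in>I. P))"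
  proof (intro nn_integral_mono)
    fix z assume "z \<in> space (\<Pi>\<^sub>M i\<in>I. P)"
    then have w_z: "\<And>i. i \<in> I \<Longrightarrow> 0 \<le> w (z i)" using w_nonneg by (auto simp: space_PiM)
    have "b * region_mass w A I z \<le> (\<Sum>k\<in>I. if z k \<in> A \<and>
        region_mass w {x\<in>A. s x < s (z k)} I z < b * region_mass w A I z then w (z k) else 0)"
      using I(1) w_z b(2) by (rule region_mass_selected_ge)
    then show "ennreal b * (\<Sum>k\<in>I. mass k z) \<le> (\<Sum>k\<in>I. sel k z)"
      using w_z b(1) region_mass_nonneg[of I w z A, OF w_z]
      by (simp add: mass_def sel_def region_mass_def ennreal_leI ennreal_mult[symmetric])
  qed
  also have "\<dots> = of_nat (card I) * integral\<^sup>N (\<Pi>\<^sub>M i\<in>I. P) (sel n)"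
    by (rule sel_sum)
  finally have "of_nat (card I) * (ennreal b * integral\<^sup>N (\<Pi>\<^sub>M i\<in>I. P) (mass n)) \<le>
      of_nat (card I) * integral\<^sup>N (\<Pi>\<^sub>M i\<in>I. P) (sel n)" .
  moreover have "card I \<noteq> 0" using I by auto
  ultimately show ?thesis
    unfolding mass_def sel_def by (subst (asm) ennreal_mult_le_mult_iff) auto
qed

lemma nn_integral_pair_density_fun_upd:
  fixes f :: "'b \<Rightarrow> ennreal"
  assumes P: "sigma_finite_measure P" and Q: "sigma_finite_measure (density P f)"
    and f: "f \<in> borel_measurable P" and N: "finite N" "n \<notin> N"
    and \<psi>: "\<psi> \<in> borel_measurable (\<Pi>\<^sub>M i\<in>insert n N. P)"
  shows "(\<integral>\<^sup>+\<omega>. \<psi> ((fst \<omega>)(n := snd \<omega>)) \<partial>((\<Pi>\<^sub>M i\<in>N. P) \<Otimes>\<^sub>M density P f)) =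
    (\<integral>\<^sup>+z. f (z n) * \<psi> z \<partial>(\<Pi>\<^sub>M i\<in>insert n N. P))"
proof -
  interpret P: product_sigma_finite "\<lambda>_. P"
    using P by (simp add: product_sigma_finite_def)
  interpret Q: sigma_finite_measure "density P f" by (rule Q)
  have upd_meas: "(\<lambda>\<omega>. (fst \<omega>)(n := snd \<omega>)) \<in>
      (\<Pi>\<^sub>M i\<in>N. P) \<Otimes>\<^sub>M density P f \<rightarrow>\<^sub>M (\<Pi>\<^sub>M i\<in>insert n N. P)"
    by (rule measurable_fun_upd[where J=N]) auto
  have "(\<integral>\<^sup>+\<omega>. \<psi> ((fst \<omega>)(n := snd \<omega>)) \<partial>((\<Pi>\<^sub>M i\<in>N. P) \<Otimes>\<^sub>M density P f)) =
      (\<integral>\<^sup>+D. \<integral>\<^sup>+t. \<psi> (D(n := t)) \<partial>density P f \<partial>(\<Pi>\<^sub>M i\<in>N. P))"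
    using Q.nn_integral_fst[OF measurable_compose[OF upd_meas \<psi>]] by simp
  also have "\<dots> = (\<integral>\<^sup>+D. \<integral>\<^sup>+t. f t * \<psi> (D(n := t)) \<partial>P \<partial>(\<Pi>\<^sub>M i\<in>N. P))"
    using f \<psi> N(2) by (intro nn_integral_cong nn_integral_density) auto
  also have "\<dots> = (\<integral>\<^sup>+z. f (z n) * \<psi> z \<partial>(\<Pi>\<^sub>M i\<in>insert n N. P))"
    using f \<psi> N by (subst P.product_nn_integral_insert) auto
  finally show ?thesis .
qed

lemma emeasure_pair_density_fun_upd:
  fixes f :: "'b \<Rightarrow> ennreal"
  assumes P: "sigma_finite_measure P" and Q: "sigma_finite_measure (density P f)"
    and f: "f \<in> borel_measurable P" and N: "finite N" "n \<notin> N"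
    and \<Phi>: "Measurable.pred (\<Pi>\<^sub>M i\<in>insert n N. P) \<Phi>"
  shows "emeasure ((\<Pi>\<^sub>M i\<in>N. P) \<Otimes>\<^sub>M density P f)
      {\<omega>\<in>space ((\<Pi>\<^sub>M i\<in>N. P) \<Otimes>\<^sub>M density P f). \<Phi> ((fst \<omega>)(n := snd \<omega>))} =
    (\<integral>\<^sup>+z. (if \<Phi> z then f (z n) else 0) \<partial>(\<Pi>\<^sub>M i\<in>insert n N. P))"
proof -
  let ?M = "(\<Pi>\<^sub>M i\<in>N. P) \<Otimes>\<^sub>M density P f"
  have upd_meas: "(\<lambda>\<omega>. (fst \<omega>)(n := snd \<omega>)) \<in> ?M \<rightarrow>\<^sub>M (\<Pi>\<^sub>M i\<in>insert n N. P)"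
    by (rule measurable_fun_upd[where J=N]) auto
  have "{\<omega>\<in>space ?M. \<Phi> ((fst \<omega>)(n := snd \<omega>))} \<in> sets ?M"
    using measurable_compose[OF upd_meas \<Phi>] by (simp only: pred_def)
  then have "emeasure ?M {\<omega>\<in>space ?M. \<Phi> ((fst \<omega>)(n := snd \<omega>))} =
      (\<integral>\<^sup>+\<omega>. indicator {\<omega>\<in>space ?M. \<Phi> ((fst \<omega>)(n := snd \<omega>))} \<omega> \<partial>?M)"
    by (rule nn_integral_indicator[symmetric])
  also have "\<dots> = (\<integral>\<^sup>+\<omega>. indicator {z. \<Phi> z} ((fst \<omega>)(n := snd \<omega>)) \<partial>?M)"
    by (intro nn_integral_cong) (simp add: indicator_def)
  also have "\<dots> = (\<integral>\<^sup>+z. f (z n) * indicator {z. \<Phi> z} z \<partial>(\<Pi>\<^sub>M i\<in>insert n N. P))"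
    using \<Phi> by (intro nn_integral_pair_density_fun_upd[OF P Q f N]) (simp add: pred_def)
  also have "\<dots> = (\<integral>\<^sup>+z. (if \<Phi> z then f (z n) else 0) \<partial>(\<Pi>\<^sub>M i\<in>insert n N. P))"
    by (intro nn_integral_cong) (simp add: indicator_def)
  finally show ?thesis .
qed

lemma weighted_conformal_coverage:
  fixes w s :: "'x \<times> 'y \<Rightarrow> real" and P :: "('x \<times> 'y) measure" and n :: nat
  defines "M \<equiv> (\<Pi>\<^sub>M i\<in>{..<n}. P) \<Otimes>\<^sub>M density P (\<lambda>t. ennreal (w t))"
  assumes P: "prob_space P" and Q: "prob_space (density P (\<lambda>t. ennreal (w t)))"
    and [measurable]: "w \<in> borel_measurable P" "s \<in> borel_measurable P" "A \<in> sets P"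
    and w_nonneg: "\<And>t. t \<in> space P \<Longrightarrow> 0 \<le> w t" and b: "0 < b" "b \<le> 1"
  shows "b * measure M {\<omega>\<in>space M. snd \<omega> \<in> A} \<le>
    measure M {\<omega>\<in>space M. snd \<omega> \<in> A \<and>
      ereal (s (snd \<omega>)) \<le> wquantile b w s n (fst \<omega>) A (snd \<omega>)}"
    (is "_ \<le> measure M ?covered")
proof -
  interpret PN: prob_space "\<Pi>\<^sub>M i\<in>{..<n}. P" using P by (intro prob_space_PiM) auto
  interpret Q: prob_space "density P (\<lambda>t. ennreal (w t))" by (rule Q)
  interpret M: prob_space M unfolding M_def by (rule prob_space_pair) unfold_locales
  let ?I = "insert n {..<n}"
  define sel where "sel z \<longleftrightarrow> z n \<in> A \<and>
    region_mass w {x\<in>A. s x < s (z n)} ?I z < b * region_mass w A ?I z" for z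
  have [measurable]: "(\<lambda>z. z n) \<in> (\<Pi>\<^sub>M i\<in>?I. P) \<rightarrow>\<^sub>M P" by simp
  have [measurable]: "Measurable.pred (\<Pi>\<^sub>M i\<in>?I. P) sel" unfolding sel_def by measurable
  have change_of_measure: "emeasure M {\<omega>\<in>space M. \<Phi> ((fst \<omega>)(n := snd \<omega>))} =
      (\<integral>\<^sup>+z. ennreal (if \<Phi> z then w (z n) else 0) \<partial>(\<Pi>\<^sub>M i\<in>?I. P))"
    if "Measurable.pred (\<Pi>\<^sub>M i\<in>?I. P) \<Phi>" for \<Phi>
    unfolding M_def using prob_space_imp_sigma_finite[OF P] prob_space_imp_sigma_finite[OF Q] that
    by (subst emeasure_pair_density_fun_upd) (auto intro!: nn_integral_cong)
  have "ennreal b * emeasure M {\<omega>\<in>space M. snd \<omega> \<in> A} =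
      ennreal b * (\<integral>\<^sup>+z. ennreal (if z n \<in> A then w (z n) else 0) \<partial>(\<Pi>\<^sub>M i\<in>?I. P))"
    using change_of_measure[of "\<lambda>z. z n \<in> A"] by simp
  also have "\<dots> \<le> (\<integral>\<^sup>+z. ennreal (if sel z then w (z n) else 0) \<partial>(\<Pi>\<^sub>M i\<in>?I. P))"
    unfolding sel_def using w_nonneg b by (intro nn_integral_PiM_selected_weight_ge[OF P]) auto
  also have "\<dots> = emeasure M {\<omega>\<in>space M. sel ((fst \<omega>)(n := snd \<omega>))}"
    by (rule change_of_measure[symmetric]) measurable
  also have "\<dots> \<le> emeasure M ?covered"
  proof (rule emeasure_mono)
    show "{\<omega>\<in>space M. sel ((fst \<omega>)(n := snd \<omega>))} \<subseteq> ?covered"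
    proof safe
      fix D t assume "(D, t) \<in> space M" and sel: "sel ((fst (D, t))(n := snd (D, t)))"
      then have "\<And>i. i < n \<Longrightarrow> 0 \<le> w (D i)" and "0 \<le> w t"
        using w_nonneg by (auto simp: M_def space_pair_measure space_PiM PiE_iff)
      moreover have "t \<in> A"
        and "region_mass w {x\<in>A. s x < s t} {..<n} D < b * (region_mass w A {..<n} D + w t)"
        using sel by (auto simp: sel_def region_mass_fun_upd)
      ultimately show "snd (D, t) \<in> A"
        and "ereal (s (snd (D, t))) \<le> wquantile b w s n (fst (D, t)) A (snd (D, t))"
        using b by (auto intro: le_wquantile_if_rank_less)
    qed
    show "?covered \<in> sets M"
      using w_nonneg b unfolding M_def by measurable
  qed
  finally show ?thesis
    using b by (simp add: M.emeasure_eq_measure ennreal_mult[symmetric])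
qed

lemma measure_pair_measure_snd:
  assumes "prob_space M" "prob_space N" "A \<in> sets N"
  shows "measure (M \<Otimes>\<^sub>M N) {\<omega>\<in>space (M \<Otimes>\<^sub>M N). snd \<omega> \<in> A} = measure N A"
proof -
  interpret M: prob_space M by fact
  interpret N: prob_space N by fact
  have "{\<omega>\<in>space (M \<Otimes>\<^sub>M N). snd \<omega> \<in> A} = space M \<times> A"
    using sets.sets_into_space[OF assms(3)] by (auto simp: space_pair_measure)
  then show ?thesis
    using N.emeasure_pair_measure_Times[OF sets.top assms(3), of M]
    by (simp add: measure_def M.emeasure_space_1)
qed

lemma cond_prob_union_set_ge:
  fixes w s :: "'x \<times> 'y \<Rightarrow> real" and P :: "('x \<times> 'y) measure"
  assumes P: "prob_space P" and Q: "prob_space (density P (\<lambda>t. ennreal (w t)))"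
    and [measurable]: "w \<in> borel_measurable P" "s \<in> borel_measurable P"
    and Om_meas[measurable]: "\<And>j. j \<in> {1..k} \<Longrightarrow> Om j \<in> sets P"
    and w_nonneg: "\<And>t. t \<in> space P \<Longrightarrow> 0 \<le> w t" and alpha: "0 \<le> alpha" "alpha < 1"
    and j: "j \<in> {1..k}" and Om_pos: "measure (density P (\<lambda>t. ennreal (w t))) (Om j) > 0"
  shows "cond_prob ((\<Pi>\<^sub>M i\<in>{..<n}. P) \<Otimes>\<^sub>M density P (\<lambda>t. ennreal (w t)))
      (\<lambda>(D, (x, y)). y \<in> union_set alpha w s n D k Om x) (\<lambda>(D, (x, y)). (x, y) \<in> Om j)
    \<ge> 1 - alpha"
proof -
  define M where "M = (\<Pi>\<^sub>M i\<in>{..<n}. P) \<Otimes>\<^sub>M density P (\<lambda>t. ennreal (w t))"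
  have PN: "prob_space (\<Pi>\<^sub>M i\<in>{..<n}. P)" using P by (intro prob_space_PiM) auto
  interpret M: prob_space M unfolding M_def using PN Q by (rule prob_space_pair)
  let ?covered = "\<lambda>\<omega>. \<exists>j'\<in>{1..k}. snd \<omega> \<in> Om j' \<and>
    ereal (s (snd \<omega>)) \<le> wquantile (1 - alpha) w s n (fst \<omega>) (Om j') (snd \<omega>)"
  have "(1 - alpha) * measure M {\<omega>\<in>space M. snd \<omega> \<in> Om j} \<le>
      measure M {\<omega>\<in>space M. snd \<omega> \<in> Om j \<and>
        ereal (s (snd \<omega>)) \<le> wquantile (1 - alpha) w s n (fst \<omega>) (Om j) (snd \<omega>)}"
    unfolding M_def using P Q w_nonneg alpha Om_meas[OF j]
    by (intro weighted_conformal_coverage) auto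
  also have "\<dots> \<le> measure M {\<omega>\<in>space M. ?covered \<omega> \<and> snd \<omega> \<in> Om j}"
    using j w_nonneg alpha by (intro M.finite_measure_mono) (auto simp: M_def)
  finally have coverage: "(1 - alpha) * measure M {\<omega>\<in>space M. snd \<omega> \<in> Om j} \<le>
      measure M {\<omega>\<in>space M. ?covered \<omega> \<and> snd \<omega> \<in> Om j}" .
  have mass_Om: "measure M {\<omega>\<in>space M. snd \<omega> \<in> Om j} =
      measure (density P (\<lambda>t. ennreal (w t))) (Om j)"
    unfolding M_def using PN Q Om_meas[OF j] by (intro measure_pair_measure_snd) auto
  have covered_eq: "(\<lambda>(D, (x, y)). y \<in> union_set alpha w s n D k Om x) = ?covered"
    by (auto simp: fun_eq_iff mem_union_set_iff)
  have Om_eq: "(\<lambda>(D, (x, y)). (x, y) \<in> Om j) = (\<lambda>\<omega>. snd \<omega> \<in> Om j)"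
    by auto
  show ?thesis
    unfolding cond_prob_def covered_eq Om_eq using coverage mass_Om Om_pos
    by (simp add: pos_le_divide_eq flip: M_def)
qed

lemma policy_law_prob_space:
  assumes "prob_space PX" "K \<in> PX \<Otimes>\<^sub>M MA \<rightarrow>\<^sub>M prob_algebra MY" "pol \<in> PX \<rightarrow>\<^sub>M prob_algebra MA"
  shows "prob_space (policy_law PX MY pol K)" and "sets (policy_law PX MY pol K) = sets (PX \<Otimes>\<^sub>M MY)"
proof -
  have "(\<lambda>x. pol x \<bind> (\<lambda>a. K (x, a) \<bind> (\<lambda>y. return (PX \<Otimes>\<^sub>M MY) (x, y))))
      \<in> PX \<rightarrow>\<^sub>M prob_algebra (PX \<Otimes>\<^sub>M MY)"
    using assms(2,3) by measurable
  moreover have "PX \<in> space (prob_algebra PX)" using assms(1) by (simp add: space_prob_algebra)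
  ultimately show "prob_space (policy_law PX MY pol K)"
    and "sets (policy_law PX MY pol K) = sets (PX \<Otimes>\<^sub>M MY)"
    unfolding policy_law_def by (auto dest: prob_space_bind' sets_bind')
qed

theorem propositionB4:
  fixes PX :: "'x measure" and MY :: "'y measure" and MA :: "'a measure"
    and K :: "'x \<times> 'a \<Rightarrow> 'y measure"
    and pib pist :: "'x \<Rightarrow> 'a measure"
    and w s :: "'x \<times> 'y \<Rightarrow> real"
    and alpha :: real and n k :: nat
    and Om :: "nat \<Rightarrow> ('x \<times> 'y) set"
  assumes PX: "prob_space PX"
    and K: "K \<in> measurable (PX \<Otimes>\<^sub>M MA) (prob_algebra MY)"
    and pib: "pib \<in> measurable PX (prob_algebra MA)"
    and pist: "pist \<in> measurable PX (prob_algebra MA)"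
    and w_meas: "w \<in> borel_measurable (PX \<Otimes>\<^sub>M MY)"
    and w_nonneg: "\<And>t. t \<in> space (PX \<Otimes>\<^sub>M MY) \<Longrightarrow> 0 \<le> w t"
    and w_RN: "policy_law PX MY pist K = density (policy_law PX MY pib K) (\<lambda>t. ennreal (w t))"
    and s_meas: "s \<in> borel_measurable (PX \<Otimes>\<^sub>M MY)"
    and alpha: "0 < alpha" "alpha < 1"
    and Om_meas: "\<And>j. j \<in> {1..k} \<Longrightarrow> Om j \<in> sets (PX \<Otimes>\<^sub>M MY)"
    and Om_pos: "\<And>j. j \<in> {1..k} \<Longrightarrow> measure (policy_law PX MY pist K) (Om j) > 0"
  shows "\<forall>j\<in>{1..k}.
    cond_prob ((\<Pi>\<^sub>M i\<in>{..<n}. policy_law PX MY pib K) \<Otimes>\<^sub>M policy_law PX MY pist K)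
      (\<lambda>(D, (x, y)). y \<in> union_set alpha w s n D k Om x)
      (\<lambda>(D, (x, y)). (x, y) \<in> Om j)
    \<ge> 1 - alpha"
proof -
  define P where "P = policy_law PX MY pib K"
  have P: "prob_space P" and sets_P: "sets P = sets (PX \<Otimes>\<^sub>M MY)"
    unfolding P_def using policy_law_prob_space[OF PX K pib] by auto
  have Q: "prob_space (density P (\<lambda>t. ennreal (w t)))"
    using policy_law_prob_space(1)[OF PX K pist] unfolding w_RN P_def .
  have "w \<in> borel_measurable P" "s \<in> borel_measurable P" "\<And>j. j \<in> {1..k} \<Longrightarrow> Om j \<in> sets P"
    using w_meas s_meas Om_meas by (simp_all add: measurable_cong_sets[OF sets_P refl] sets_P)
  moreover have "\<And>t. t \<in> space P \<Longrightarrow> 0 \<le> w t"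
    using w_nonneg sets_eq_imp_space_eq[OF sets_P] by simp
  ultimately show ?thesis
    using cond_prob_union_set_ge[OF P Q] alpha Om_pos
    unfolding w_RN P_def[symmetric] by auto
qed

end
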